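(* Consider the algorithm SCHEMATIC-ALGO$(G,\mu^*,m^*,\Delta^*,\gamma)$ described in the context. At the end of its last round, with high probability $|U|<\mu^*\cdot(\Delta^* )^\gamma$, where $U$ is the set of edges of $E\setminus H$ underfull w.r.t. the final set $H$.
   Context: Let $G=(V,E)$ be a graph with $n$ vertices, $m$ edges, average degree $d$; $\mu(G)$ is its maximum matching size. Fix a small constant $\epsilon\in(0,1)$ and $\beta:=1/\Theta(\epsilon^3)$. For $H\subseteq E$ and a pair $e=(u,v)$, $\deg_e(H):=\deg_u(H)+\deg_v(H)$. An edge $e$ is underfull w.r.t. $H$ if $\deg_e(H)<(1-\epsilon)\beta$ and overfull w.r.t. $H$ if $\deg_e(H)>\beta$. The parameters satisfy $\mu(G)/(2+\epsilon)\le\mu^*\le n$, $d\le\Delta^*\le n$, $m^*\ge m$, $0<\gamma<1$. SCHEMATIC-ALGO: set $H\leftarrow\emptyset$. Repeat rounds: in each round set Status $\leftarrow$ false; for $i=1,\dots,(100m^*\log n)/(\mu^*(\Delta^* )^\gamma)$, sample an edge $e\in E$ uniformly at random (independently, with repetition); if $e\in E\setminus H$ and $e$ is underfull w.r.t. $H$, then set Status $\leftarrow$ true, $H\leftarrow H\cup\{e\}$, and then while some edge of $H$ is overfull w.r.t. $H$, remove such an edge from $H$. If at the end of a round Status is false, stop the rounds (this is the last round). Then let $U$ be the set of edges of $E\setminus H$ underfull w.r.t. $H$, take any $V_{small}\subseteq V$ with $\{v:\deg_v(U)\le (1-\epsilon)(\Delta^* )^\gamma/\epsilon\}\subseteq V_{small}\subseteq\{v:\deg_v(U)\le(1+\epsilon)(\Delta^*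 )^\gamma/\epsilon\}$, let $E_{small}:=\{(u,v)\in H\cup U: u,v\in V_{small}\}$, and return $\mu(E_{small})$. "With high probability" means with probability at least $1-1/\mathrm{poly}(n)$. *)

theory Defs
  imports "HOL-Probability.Probability" "HOL-Library.While_Combinator"
begin

definition simple_graph :: "'a set \<Rightarrow> 'a set set \<Rightarrow> bool" where
  "simple_graph V E \<longleftrightarrow> finite V \<and> (\<forall>e\<in>E. \<exists>u v. e = {u, v} \<and> u \<noteq> v \<and> u \<in> V \<and> v \<in> V)"

definition is_matching :: "'a set set \<Rightarrow> bool" where
  "is_matching M \<longleftrightarrow> (\<forall>e\<in>M. \<forall>f\<in>M. e \<noteq> f \<longrightarrow> e \<inter> f = {})"

definition max_matching_size :: "'a set set \<Rightarrow> nat" where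
  "max_matching_size E = Max {card M | M. M \<subseteq> E \<and> is_matching M}"

definition deg :: "'a set set \<Rightarrow> 'a \<Rightarrow> nat" where
  "deg H v = card {e \<in> H. v \<in> e}"

definition deg_edge :: "'a set set \<Rightarrow> 'a set \<Rightarrow> nat" where
  "deg_edge H e = (\<Sum>v\<in>e. deg H v)"

definition underfull :: "real \<Rightarrow> real \<Rightarrow> 'a set set \<Rightarrow> 'a set \<Rightarrow> bool" where
  "underfull eps beta H e \<longleftrightarrow> real (deg_edge H e) < (1 - eps) * beta"

definition overfull :: "real \<Rightarrow> 'a set set \<Rightarrow> 'a set \<Rightarrow> bool" where
  "overfull beta H e \<longleftrightarrow> real (deg_edge H e) > beta"

text \<open>"while some edge of H is overfull, remove such an edge"; the arbitrary choice
  of the edge to remove is resolved by the policy pick.\<close>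
definition cleanup :: "real \<Rightarrow> ('a set set \<Rightarrow> 'a set) \<Rightarrow> 'a set set \<Rightarrow> 'a set set" where
  "cleanup beta pick H0 = while (\<lambda>H. \<exists>f\<in>H. overfull beta H f) (\<lambda>H. H - {pick H}) H0"

definition sample_step :: "real \<Rightarrow> real \<Rightarrow> 'a set set \<Rightarrow> ('a set set \<Rightarrow> 'a set)
    \<Rightarrow> 'a set set \<Rightarrow> 'a set \<Rightarrow> 'a set set" where
  "sample_step eps beta E pick H e =
     (if e \<in> E - H \<and> underfull eps beta H e then cleanup beta pick (insert e H) else H)"

primrec H_after :: "real \<Rightarrow> real \<Rightarrow> 'a set set \<Rightarrow> ('a set set \<Rightarrow> 'a set)
    \<Rightarrow> 'a set stream \<Rightarrow> nat \<Rightarrow> 'a set set" where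
  "H_after eps beta E pick \<omega> 0 = {}"
| "H_after eps beta E pick \<omega> (Suc t) =
     sample_step eps beta E pick (H_after eps beta E pick \<omega> t) (\<omega> !! t)"

text \<open>Round r (0-based) consists of samples r*k, ..., r*k+k-1; its Status becomes true
  iff some sample of the round is an edge of E - H underfull w.r.t. the current H.\<close>
definition round_status :: "real \<Rightarrow> real \<Rightarrow> 'a set set \<Rightarrow> ('a set set \<Rightarrow> 'a set)
    \<Rightarrow> nat \<Rightarrow> 'a set stream \<Rightarrow> nat \<Rightarrow> bool" where
  "round_status eps beta E pick k \<omega> r \<longleftrightarrow>
     (\<exists>i<k. \<omega> !! (r * k + i) \<in> E - H_after eps beta E pick \<omega> (r * k + i)
            \<and> underfull eps beta (H_after eps beta E pick \<omega> (r * k + i)) (\<omega> !! (r * k + i)))"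

definition is_last_round :: "real \<Rightarrow> real \<Rightarrow> 'a set set \<Rightarrow> ('a set set \<Rightarrow> 'a set)
    \<Rightarrow> nat \<Rightarrow> 'a set stream \<Rightarrow> nat \<Rightarrow> bool" where
  "is_last_round eps beta E pick k \<omega> r \<longleftrightarrow>
     (\<forall>r'<r. round_status eps beta E pick k \<omega> r') \<and> \<not> round_status eps beta E pick k \<omega> r"

definition underfull_set :: "real \<Rightarrow> real \<Rightarrow> 'a set set \<Rightarrow> 'a set set \<Rightarrow> 'a set set" where
  "underfull_set eps beta E H = {e \<in> E - H. underfull eps beta H e}"

definition samples_per_round :: "nat \<Rightarrow> real \<Rightarrow> real \<Rightarrow> real \<Rightarrow> real \<Rightarrow> nat" where
  "samples_per_round n mu_s m_s Delta_s gamma =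
     nat \<lceil>100 * m_s * ln (real n) / (mu_s * Delta_s powr gamma)\<rceil>"

end

theory Submission
  imports Defs
begin

(*
  With b = floor beta, the potential (2b - 3)|H| - sum_v deg_v(H)^2 is an integer that
  strictly increases whenever an underfull edge is inserted or an overfull edge is removed,
  and it never exceeds (2b - 3)|E|.  Hence at most 2b|E| <= n^4 rounds have Status true, and
  the first round with Status false is the last one.  That round leaves H unchanged, so if
  |U| >= T = mu_s Delta_s^gamma at its end, then all k of its samples missed the at least T
  underfull edges present at its start.  Whatever happened before, this has probability at
  most (1 - T/m)^k <= exp (-kT/m) <= n^-100, and a union bound over the rounds finishes.
*)

section \<open>Simple graphs and the degree potential\<close>

lemma simple_graph_edge:
  assumes "simple_graph V E" "e \<in> E"
  shows "e \<subseteq> V" "card e = 2"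
  using assms unfolding simple_graph_def by auto

lemma simple_graph_finite_edges:
  assumes "simple_graph V E"
  shows "finite E"
proof (rule finite_subset)
  show "E \<subseteq> Pow V" using simple_graph_edge[OF assms] by blast
  show "finite (Pow V)" using assms by (simp add: simple_graph_def)
qed

lemma simple_graph_card_edges_le:
  assumes "simple_graph V E"
  shows "card E \<le> card V ^ 2"
proof (cases "2 \<le> card V")
  case True
  have "card E \<le> card {e. e \<subseteq> V \<and> card e = 2}"
    using assms simple_graph_edge[OF assms]
    by (intro card_mono) (auto simp: simple_graph_def)
  also have "\<dots> = card V choose 2"
    using assms by (simp add: simple_graph_def n_subsets)
  also have "\<dots> \<le> card V ^ 2" using True by (rule binomial_le_pow)
  finally show ?thesis .
next
  case False
  have "card e \<le> card V" if "e \<in> E" for e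
    using assms simple_graph_edge[OF assms that] by (intro card_mono) (auto simp: simple_graph_def)
  then have "E = {}" using False simple_graph_edge(2)[OF assms] by force
  then show ?thesis by simp
qed

lemma max_matching_size_pos:
  assumes "finite E" "E \<noteq> {}"
  shows "1 \<le> max_matching_size E"
proof -
  obtain e where "e \<in> E" using assms(2) by blast
  then have "card {e} \<in> {card M | M. M \<subseteq> E \<and> is_matching M}"
    unfolding is_matching_def by blast
  moreover have "finite {card M | M. M \<subseteq> E \<and> is_matching M}"
    using assms(1) by simp
  ultimately have "card {e} \<le> max_matching_size E"
    unfolding max_matching_size_def by (rule Max_ge[rotated])
  then show ?thesis by simp
qed

lemma deg_insert_notin:
  assumes "finite H" "e \<notin> H"
  shows "deg (insert e H) v = deg H v + (if v \<in> e then 1 else 0)"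
proof -
  have "{f \<in> insert e H. v \<in> f} = (if v \<in> e then insert e {f \<in> H. v \<in> f} else {f \<in> H. v \<in> f})"
    by auto
  then show ?thesis using assms by (simp add: deg_def)
qed

lemma deg_edge_insert_notin:
  assumes "finite H" "e \<notin> H"
  shows "deg_edge (insert e H) e = deg_edge H e + card e"
  using assms by (simp add: deg_edge_def deg_insert_notin sum_Suc)

lemma sum_deg_sq_insert_notin:
  assumes "finite V" "e \<subseteq> V" "finite H" "e \<notin> H"
  shows "(\<Sum>v\<in>V. deg (insert e H) v ^ 2) = (\<Sum>v\<in>V. deg H v ^ 2) + 2 * deg_edge H e + card e"
proof -
  have "(\<Sum>v\<in>V. deg (insert e H) v ^ 2)
        = (\<Sum>v\<in>V. deg H v ^ 2 + (if v \<in> e then 2 * deg H v + 1 else 0))"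
    using assms(3,4) by (intro sum.cong) (auto simp: deg_insert_notin power2_eq_square)
  also have "\<dots> = (\<Sum>v\<in>V. deg H v ^ 2) + (\<Sum>v\<in>V \<inter> e. 2 * deg H v + 1)"
    unfolding sum.inter_restrict[OF assms(1)] by (rule sum.distrib)
  also have "V \<inter> e = e" using assms(2) by blast
  finally show ?thesis by (simp add: deg_edge_def sum_Suc sum_distrib_left)
qed

definition degree_potential :: "nat \<Rightarrow> 'a set \<Rightarrow> 'a set set \<Rightarrow> int" where
  "degree_potential b V H = (2 * int b - 3) * int (card H) - (\<Sum>v\<in>V. int (deg H v) ^ 2)"

lemma degree_potential_insert:
  assumes "finite V" "e \<subseteq> V" "card e = 2" "finite H" "e \<notin> H"
  shows "degree_potential b V (insert e H)
           = degree_potential b V H + 2 * int b - 5 - 2 * int (deg_edge H e)"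
proof -
  have "(\<Sum>v\<in>V. int (deg (insert e H) v) ^ 2) = (\<Sum>v\<in>V. int (deg H v) ^ 2) + 2 * int (deg_edge H e) + 2"
    using sum_deg_sq_insert_notin[OF assms(1,2,4,5)] assms(3)
    by (simp flip: of_nat_power of_nat_sum)
  then show ?thesis using assms(4,5) by (simp add: degree_potential_def algebra_simps)
qed

lemma degree_potential_remove:
  assumes "finite V" "e \<subseteq> V" "card e = 2" "finite H" "e \<in> H"
  shows "degree_potential b V (H - {e})
           = degree_potential b V H + 2 * int (deg_edge H e) + 1 - 2 * int b"
proof -
  have H: "H = insert e (H - {e})" using assms(5) by blast
  have "deg_edge H e = deg_edge (H - {e}) e + 2"
    using deg_edge_insert_notin[of "H - {e}" e] assms(3,4) H by simp
  then show ?thesis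
    using degree_potential_insert[OF assms(1-3), of "H - {e}" b] assms(4) H by simp
qed

lemma degree_potential_le:
  assumes "finite E" "H \<subseteq> E" "2 \<le> b"
  shows "degree_potential b V H \<le> (2 * int b - 3) * int (card E)"
proof -
  have "(2 * int b - 3) * int (card H) \<le> (2 * int b - 3) * int (card E)"
    using assms by (intro mult_left_mono) (auto intro: card_mono)
  moreover have "0 \<le> (\<Sum>v\<in>V. int (deg H v) ^ 2)" by (simp add: sum_nonneg)
  ultimately show ?thesis unfolding degree_potential_def by linarith
qed

section \<open>Processes driven by independent samples\<close>

primrec trajectory :: "('s \<Rightarrow> 'b \<Rightarrow> 's) \<Rightarrow> 's \<Rightarrow> 'b stream \<Rightarrow> nat \<Rightarrow> 's" where
  "trajectory f s \<omega> 0 = s"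
| "trajectory f s \<omega> (Suc t) = f (trajectory f s \<omega> t) (\<omega> !! t)"

lemma trajectory_Stream_Suc: "trajectory f s (x ## \<omega>) (Suc t) = trajectory f (f s x) \<omega> t"
  by (induction t) auto

lemma measurable_trajectory:
  assumes "countable S" "s \<in> S" "\<And>s x. s \<in> S \<Longrightarrow> f s x \<in> S"
  shows "(\<lambda>\<omega>. trajectory f s \<omega> t) \<in> stream_space (measure_pmf p) \<rightarrow>\<^sub>M count_space S"
proof (induction t)
  case 0
  show ?case using assms(2) by simp
next
  case (Suc t)
  have "(\<lambda>\<omega>. f s' (\<omega> !! t)) \<in> stream_space (measure_pmf p) \<rightarrow>\<^sub>M count_space S" if "s' \<in> S" for s'
    using assms(3)[OF that] by (intro measurable_compose[OF measurable_snth]) auto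
  from measurable_compose_countable'[OF this Suc.IH assms(1)] show ?case
    by simp
qed

lemma pred_trajectory:
  assumes "countable S" "s \<in> S" "\<And>s x. s \<in> S \<Longrightarrow> f s x \<in> S"
    and "\<And>s. s \<in> S \<Longrightarrow> Measurable.pred (stream_space (measure_pmf p)) (Q s)"
  shows "Measurable.pred (stream_space (measure_pmf p)) (\<lambda>\<omega>. Q (trajectory f s \<omega> t) \<omega>)"
  using assms(4) measurable_trajectory[OF assms(1-3)] assms(1)
  by (rule measurable_compose_countable')

lemma emeasure_stream_avoid:
  "emeasure (stream_space (measure_pmf p)) {\<omega>. \<forall>i<k. \<omega> !! i \<notin> A}
     = ennreal (measure_pmf.prob p (- A) ^ k)"
proof (induction k)
  case 0
  interpret prob_space "stream_space (measure_pmf p)"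
    by (rule prob_space.prob_space_stream_space[OF prob_space_measure_pmf])
  show ?case using emeasure_space_1 by (simp add: space_stream_space)
next
  case (Suc k)
  let ?M = "stream_space (measure_pmf p)"
  have "Measurable.pred ?M (\<lambda>\<omega>. \<forall>i<Suc k. \<omega> !! i \<notin> A)"
    by (intro pred_intros_countable pred_intros_imp' measurable_compose[OF measurable_snth]) simp
  then have "{\<omega>. \<forall>i<Suc k. \<omega> !! i \<notin> A} \<in> sets ?M"
    by (simp add: pred_def space_stream_space)
  then have "emeasure ?M {\<omega>. \<forall>i<Suc k. \<omega> !! i \<notin> A}
      = (\<integral>\<^sup>+x. emeasure ?M {\<omega>. \<forall>i<k. \<omega> !! i \<notin> A} * indicator (- A) x \<partial>measure_pmf p)"
    by (subst prob_space.emeasure_stream_space[OF prob_space_measure_pmf])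
       (auto intro!: nn_integral_cong simp: space_stream_space All_less_Suc2 split: split_indicator)
  also have "\<dots> = ennreal (measure_pmf.prob p (- A) ^ k) * emeasure (measure_pmf p) (- A)"
    by (simp add: Suc.IH nn_integral_cmult_indicator)
  also have "\<dots> = ennreal (measure_pmf.prob p (- A) ^ Suc k)"
    by (simp add: measure_pmf.emeasure_eq_measure ennreal_mult' mult.commute)
  finally show ?case .
qed

(* Conditioning on the first sample restarts the process from f s x, so the bound only
   needs to be checked at time 0, where it is the previous lemma. *)
lemma emeasure_trajectory_then_avoid:
  assumes "countable S" "s \<in> S" "\<And>s x. s \<in> S \<Longrightarrow> f s x \<in> S"
    and "\<And>s. s \<in> S \<Longrightarrow> P s \<Longrightarrow> q \<le> measure_pmf.prob p (A s)"
  shows "emeasure (stream_space (measure_pmf p))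
           {\<omega>. P (trajectory f s \<omega> t) \<and> (\<forall>i<k. \<omega> !! (t + i) \<notin> A (trajectory f s \<omega> t))}
         \<le> ennreal ((1 - q) ^ k)"
  using assms(2)
proof (induction t arbitrary: s)
  case 0
  show ?case
  proof (cases "P s")
    case True
    have "measure_pmf.prob p (- A s) = 1 - measure_pmf.prob p (A s)"
      using measure_pmf.prob_compl[of "A s" p] by (simp add: Compl_eq_Diff_UNIV)
    then have "measure_pmf.prob p (- A s) ^ k \<le> (1 - q) ^ k"
      using assms(4)[OF 0 True] by (intro power_mono) auto
    then show ?thesis using True by (simp add: emeasure_stream_avoid ennreal_leI)
  qed simp
next
  case (Suc t)
  let ?M = "stream_space (measure_pmf p)"
  let ?X = "\<lambda>s t. {\<omega>. P (trajectory f s \<omega> t) \<and> (\<forall>i<k. \<omega> !! (t + i) \<notin> A (trajectory f s \<omega> t))}"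
  have "Measurable.pred ?M (\<lambda>\<omega>. P s' \<and> (\<forall>i<k. \<omega> !! (Suc t + i) \<notin> A s'))" for s'
    by (intro pred_intros_logic pred_intros_countable pred_intros_imp'
        measurable_compose[OF measurable_snth]) simp_all
  from pred_trajectory[where f = f and t = "Suc t", OF assms(1) Suc.prems assms(3) this]
  have "?X s (Suc t) \<in> sets ?M"
    by (simp add: pred_def space_stream_space del: trajectory.simps)
  then have "emeasure ?M (?X s (Suc t)) = (\<integral>\<^sup>+x. emeasure ?M (?X (f s x) t) \<partial>measure_pmf p)"
    by (subst prob_space.emeasure_stream_space[OF prob_space_measure_pmf])
       (auto simp: space_stream_space trajectory_Stream_Suc simp del: trajectory.simps
         intro!: nn_integral_cong)
  also have "\<dots> \<le> (\<integral>\<^sup>+x. ennreal ((1 - q) ^ k) \<partial>measure_pmf p)"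
    using Suc.IH assms(3)[OF Suc.prems] by (intro nn_integral_mono) blast
  also have "\<dots> = ennreal ((1 - q) ^ k)"
    by (simp add: measure_pmf.emeasure_space_1)
  finally show ?case .
qed

section \<open>The sampling algorithm\<close>

lemma H_after_eq_trajectory:
  "H_after eps beta E pick \<omega> t = trajectory (sample_step eps beta E pick) {} \<omega> t"
  by (induction t) auto

lemma round_status_iff:
  "round_status eps beta E pick k \<omega> r \<longleftrightarrow>
     (\<exists>i<k. \<omega> !! (r * k + i) \<in> underfull_set eps beta E (H_after eps beta E pick \<omega> (r * k + i)))"
  by (simp add: round_status_def underfull_set_def)

lemma sample_step_eq_self:
  "x \<notin> underfull_set eps beta E H \<Longrightarrow> sample_step eps beta E pick H x = H"
  unfolding sample_step_def underfull_set_def by (rule if_not_P) simp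

locale edcs_sampling =
  fixes V :: "'a set" and E :: "'a set set" and eps beta :: real
    and pick :: "'a set set \<Rightarrow> 'a set"
  assumes graph: "simple_graph V E"
    and two_le_beta: "2 \<le> beta"
    and three_le_eps_beta: "3 \<le> eps * beta"
    and pick_overfull:
      "\<And>H. H \<subseteq> E \<Longrightarrow> \<exists>f\<in>H. overfull beta H f \<Longrightarrow> pick H \<in> H \<and> overfull beta H (pick H)"
begin

abbreviation potential :: "'a set set \<Rightarrow> int" where
  "potential \<equiv> degree_potential (nat \<lfloor>beta\<rfloor>) V"

lemma finite_edges: "finite E"
  by (rule simple_graph_finite_edges[OF graph])

lemma potential_insert_underfull:
  assumes "H \<subseteq> E" "e \<in> E - H" "underfull eps beta H e"
  shows "potential H < potential (insert e H)"
proof -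
  have "real (deg_edge H e) < beta - 3"
    using assms(3) three_le_eps_beta unfolding underfull_def by (simp add: algebra_simps)
  then have small: "int (deg_edge H e) + 3 \<le> int (nat \<lfloor>beta\<rfloor>)"
    by linarith
  have "finite V" "finite H" "e \<subseteq> V" "card e = 2"
    using graph finite_edges assms(1,2) simple_graph_edge[OF graph]
    by (auto simp: simple_graph_def intro: finite_subset)
  then have "potential (insert e H)
      = potential H + 2 * int (nat \<lfloor>beta\<rfloor>) - 5 - 2 * int (deg_edge H e)"
    using assms(2) by (intro degree_potential_insert) auto
  with small show ?thesis by linarith
qed

lemma potential_remove_overfull:
  assumes "H \<subseteq> E" "e \<in> H" "overfull beta H e"
  shows "potential H < potential (H - {e})"
proof -
  have "nat \<lfloor>beta\<rfloor> < deg_edge H e"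
    using assms(3) two_le_beta unfolding overfull_def by linarith
  moreover have "finite V" "finite H" "e \<subseteq> V" "card e = 2"
    using graph finite_edges assms(1,2) simple_graph_edge[OF graph]
    by (auto simp: simple_graph_def intro: finite_subset)
  then have "potential (H - {e})
      = potential H + 2 * int (deg_edge H e) + 1 - 2 * int (nat \<lfloor>beta\<rfloor>)"
    using assms(2) by (intro degree_potential_remove) auto
  ultimately show ?thesis by linarith
qed

lemma cleanup_subset_potential:
  assumes "H \<subseteq> E"
  shows "cleanup beta pick H \<subseteq> H \<and> potential H \<le> potential (cleanup beta pick H)"
  unfolding cleanup_def
proof (rule while_rule[where P = "\<lambda>H'. H' \<subseteq> H \<and> potential H \<le> potential H'"
      and r = "Wellfounded.measure card"])
  fix H' assume inv: "H' \<subseteq> H \<and> potential H \<le> potential H'" and "\<exists>f\<in>H'. overfull beta H' f"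
  then have pick: "pick H' \<in> H'" "overfull beta H' (pick H')"
    using pick_overfull assms by blast+
  then show "H' - {pick H'} \<subseteq> H \<and> potential H \<le> potential (H' - {pick H'})"
    using inv potential_remove_overfull[of H' "pick H'"] assms by force
  show "(H' - {pick H'}, H') \<in> Wellfounded.measure card"
  proof -
    have "finite H'" using inv assms finite_edges by (blast intro: finite_subset)
    from card_Diff1_less[OF this pick(1)] show ?thesis by simp
  qed
qed auto

lemma sample_step_subset:
  "H \<subseteq> E \<Longrightarrow> sample_step eps beta E pick H x \<subseteq> E"
  using cleanup_subset_potential[of "insert x H"] by (auto simp: sample_step_def)

lemma potential_sample_step_less:
  assumes "H \<subseteq> E" "x \<in> underfull_set eps beta E H"
  shows "potential H < potential (sample_step eps beta E pick H x)"
proof -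
  have "potential H < potential (insert x H)"
    using assms potential_insert_underfull unfolding underfull_set_def by blast
  also have "\<dots> \<le> potential (cleanup beta pick (insert x H))"
    using assms cleanup_subset_potential[of "insert x H"] unfolding underfull_set_def by blast
  finally show ?thesis
    using assms(2) unfolding sample_step_def underfull_set_def by simp
qed

lemma potential_sample_step_mono:
  "H \<subseteq> E \<Longrightarrow> potential H \<le> potential (sample_step eps beta E pick H x)"
  using potential_sample_step_less[of H x] by (fastforce simp: sample_step_def underfull_set_def)

abbreviation H_at :: "'a set stream \<Rightarrow> nat \<Rightarrow> 'a set set" where
  "H_at \<equiv> H_after eps beta E pick"

lemma H_after_subset: "H_at \<omega> t \<subseteq> E"
  by (induction t) (simp_all add: sample_step_subset)

lemma potential_H_after_mono: "t \<le> t' \<Longrightarrow> potential (H_at \<omega> t) \<le> potential (H_at \<omega> t')"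
proof (induction t' rule: dec_induct)
  case (step t')
  then show ?case
    using potential_sample_step_mono[OF H_after_subset, of \<omega> t' "\<omega> !! t'"] by simp
qed simp

lemma potential_H_after_rounds:
  "(\<forall>r'<r. round_status eps beta E pick k \<omega> r') \<Longrightarrow> int r \<le> potential (H_at \<omega> (r * k))"
proof (induction r)
  case 0
  show ?case by (simp add: degree_potential_def deg_def)
next
  case (Suc r)
  then obtain i where i: "i < k"
    and hit: "\<omega> !! (r * k + i) \<in> underfull_set eps beta E (H_at \<omega> (r * k + i))"
    by (auto simp: round_status_iff)
  have "potential (H_at \<omega> (r * k)) \<le> potential (H_at \<omega> (r * k + i))"
    by (rule potential_H_after_mono) simp
  also have "\<dots> < potential (H_at \<omega> (Suc (r * k + i)))"
    using potential_sample_step_less[OF H_after_subset hit] by simp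
  also have "\<dots> \<le> potential (H_at \<omega> (Suc r * k))"
    by (rule potential_H_after_mono) (use i in simp)
  finally show ?case using Suc by simp
qed

lemma H_after_const_in_round:
  assumes "\<not> round_status eps beta E pick k \<omega> r" "i \<le> k"
  shows "H_at \<omega> (r * k + i) = H_at \<omega> (r * k)"
  using assms(2)
proof (induction i)
  case (Suc i)
  have "\<omega> !! (r * k + i) \<notin> underfull_set eps beta E (H_at \<omega> (r * k + i))"
    using assms(1) Suc.prems by (auto simp: round_status_iff)
  then have "H_at \<omega> (Suc (r * k + i)) = H_at \<omega> (r * k + i)"
    by (simp add: sample_step_eq_self)
  with Suc show ?case by simp
qed simp

abbreviation max_rounds :: nat where
  "max_rounds \<equiv> 2 * nat \<lfloor>beta\<rfloor> * card E"

lemma ex_last_round: "\<exists>r \<le> max_rounds. is_last_round eps beta E pick k \<omega> r"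
proof -
  let ?idle = "\<lambda>r. \<not> round_status eps beta E pick k \<omega> r"
  have "\<exists>r \<le> max_rounds. ?idle r"
  proof (rule ccontr)
    assume "\<not> ?thesis"
    then have "int (Suc max_rounds) \<le> potential (H_at \<omega> (Suc max_rounds * k))"
      by (intro potential_H_after_rounds) auto
    moreover have "potential (H_at \<omega> (Suc max_rounds * k)) \<le> (2 * int (nat \<lfloor>beta\<rfloor>) - 3) * int (card E)"
      using two_le_beta by (intro degree_potential_le finite_edges H_after_subset) linarith
    ultimately show False
      by (simp add: algebra_simps)
  qed
  then obtain r where "r \<le> max_rounds" "?idle r" by blast
  define r0 where "r0 = (LEAST r. ?idle r)"
  have "?idle r0" unfolding r0_def by (rule LeastI) fact
  moreover have "\<forall>r'<r0. \<not> ?idle r'" unfolding r0_def using not_less_Least by blast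
  moreover have "r0 \<le> max_rounds"
    using Least_le[of ?idle r] \<open>?idle r\<close> \<open>r \<le> max_rounds\<close> unfolding r0_def by linarith
  ultimately show ?thesis unfolding is_last_round_def by blast
qed

definition missed_round :: "nat \<Rightarrow> real \<Rightarrow> nat \<Rightarrow> 'a set stream set" where
  "missed_round k T r = {\<omega>. T \<le> real (card (underfull_set eps beta E (H_at \<omega> (r * k))))
      \<and> (\<forall>i<k. \<omega> !! (r * k + i) \<notin> underfull_set eps beta E (H_at \<omega> (r * k)))}"

lemma last_round_few_underfull_unless_missed:
  assumes "\<omega> \<notin> (\<Union>r \<le> max_rounds. missed_round k T r)"
  shows "\<exists>r. is_last_round eps beta E pick k \<omega> r
           \<and> real (card (underfull_set eps beta E (H_at \<omega> ((r + 1) * k)))) < T"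
proof -
  obtain r where r: "r \<le> max_rounds" "is_last_round eps beta E pick k \<omega> r"
    using ex_last_round by blast
  then have idle: "\<not> round_status eps beta E pick k \<omega> r"
    by (simp add: is_last_round_def)
  then have "\<forall>i<k. \<omega> !! (r * k + i) \<notin> underfull_set eps beta E (H_at \<omega> (r * k))"
    using H_after_const_in_round[OF idle] by (auto simp: round_status_iff)
  moreover have "\<omega> \<notin> missed_round k T r" using assms r(1) by blast
  moreover have "H_at \<omega> ((r + 1) * k) = H_at \<omega> (r * k)"
    using H_after_const_in_round[OF idle, of k] by (simp add: add.commute)
  ultimately show ?thesis using r(2) unfolding missed_round_def by auto
qed

abbreviation sample_space :: "'a set stream measure" where
  "sample_space \<equiv> stream_space (measure_pmf (pmf_of_set E))"

lemma pred_H_after: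
  assumes "\<And>H. H \<subseteq> E \<Longrightarrow> Measurable.pred (stream_space (measure_pmf p)) (Q H)"
  shows "Measurable.pred (stream_space (measure_pmf p)) (\<lambda>\<omega>. Q (H_at \<omega> t) \<omega>)"
  unfolding H_after_eq_trajectory
  by (rule pred_trajectory[where S = "Pow E"])
     (auto simp: assms finite_edges countable_finite sample_step_subset)

lemma pred_sample_underfull:
  "Measurable.pred (stream_space (measure_pmf p))
     (\<lambda>\<omega>. \<omega> !! j \<in> underfull_set eps beta E (H_at \<omega> t))"
  by (rule pred_H_after[where Q = "\<lambda>H \<omega>. \<omega> !! j \<in> underfull_set eps beta E H"])
     (rule measurable_compose[OF measurable_snth], simp)

lemma pred_round_status:
  "Measurable.pred (stream_space (measure_pmf p)) (\<lambda>\<omega>. round_status eps beta E pick k \<omega> r)"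
  unfolding round_status_iff
  by (intro pred_intros_countable pred_intros_conj1' pred_sample_underfull)

lemma pred_H_after_state:
  "Measurable.pred (stream_space (measure_pmf p)) (\<lambda>\<omega>. P (H_at \<omega> t))"
  by (rule pred_H_after[where Q = "\<lambda>H \<omega>. P H"]) simp

lemma sets_last_round_few_underfull:
  "{\<omega>. \<exists>r. is_last_round eps beta E pick k \<omega> r
      \<and> real (card (underfull_set eps beta E (H_at \<omega> ((r + 1) * k)))) < T} \<in> sets sample_space"
proof -
  have "Measurable.pred sample_space (\<lambda>\<omega>. \<exists>r. ((\<forall>r'. r' < r \<longrightarrow> round_status eps beta E pick k \<omega> r')
      \<and> \<not> round_status eps beta E pick k \<omega> r)
      \<and> real (card (underfull_set eps beta E (H_at \<omega> ((r + 1) * k)))) < T)"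
    by (intro pred_intros_countable pred_intros_logic(2,3) pred_intros_imp' pred_round_status
        pred_H_after_state[where P = "\<lambda>H. real (card (underfull_set eps beta E H)) < T"])
  then show ?thesis by (simp add: pred_def space_stream_space is_last_round_def)
qed

lemma sets_missed_round: "missed_round k T r \<in> sets sample_space"
proof -
  have "Measurable.pred sample_space (\<lambda>\<omega>. T \<le> real (card (underfull_set eps beta E (H_at \<omega> (r * k))))
      \<and> (\<forall>i. i < k \<longrightarrow> \<not> \<omega> !! (r * k + i) \<in> underfull_set eps beta E (H_at \<omega> (r * k))))"
    by (intro pred_intros_countable pred_intros_logic(2,3) pred_intros_imp' pred_sample_underfull
        pred_H_after_state[where P = "\<lambda>H. T \<le> real (card (underfull_set eps beta E H))"])
  then show ?thesis by (simp add: pred_def space_stream_space missed_round_def)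
qed

lemma card_underfull_set_le: "card (underfull_set eps beta E H) \<le> card E"
  by (rule card_mono[OF finite_edges]) (auto simp: underfull_set_def)

lemma emeasure_missed_round:
  assumes "E \<noteq> {}"
  shows "emeasure sample_space (missed_round k T r) \<le> ennreal ((1 - T / real (card E)) ^ k)"
proof -
  have "T / real (card E) \<le> measure_pmf.prob (pmf_of_set E) (underfull_set eps beta E H)"
    if "T \<le> real (card (underfull_set eps beta E H))" for H
  proof -
    have "E \<inter> underfull_set eps beta E H = underfull_set eps beta E H"
      by (auto simp: underfull_set_def)
    then show ?thesis
      using that assms finite_edges by (simp add: measure_pmf_of_set divide_right_mono)
  qed
  then show ?thesis
    unfolding missed_round_def H_after_eq_trajectory
    by (intro emeasure_trajectory_then_avoid[where S = "Pow E"])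
       (auto simp: finite_edges countable_finite sample_step_subset)
qed

lemma measure_missed_round:
  assumes "E \<noteq> {}"
  shows "measure sample_space (missed_round k T r) \<le> exp (- (real k * T / real (card E)))"
proof (cases "T \<le> real (card E)")
  case True
  let ?q = "T / real (card E)"
  have "0 \<le> 1 - ?q" using True assms finite_edges by (simp add: field_simps)
  then have "measure sample_space (missed_round k T r) \<le> (1 - ?q) ^ k"
    using emeasure_missed_round[OF assms] unfolding measure_def by (simp add: enn2real_leI)
  also have "\<dots> \<le> exp (- ?q) ^ k"
    using \<open>0 \<le> 1 - ?q\<close> exp_ge_add_one_self[of "- ?q"] by (intro power_mono) auto
  also have "\<dots> = exp (- (real k * T / real (card E)))"
    by (simp flip: exp_of_nat_mult)
  finally show ?thesis .
next
  case False
  have "real (card (underfull_set eps beta E H)) < T" for H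
    using False card_underfull_set_le[of H] by linarith
  then have "missed_round k T r = {}"
    unfolding missed_round_def by (auto simp: not_le[symmetric])
  then show ?thesis by simp
qed

lemma max_rounds_le:
  assumes "beta + 2 \<le> real (card V)"
  shows "real (Suc max_rounds) \<le> real (card V) ^ 4"
proof -
  let ?n = "real (card V)"
  have "real (card E) \<le> ?n ^ 2"
    using simple_graph_card_edges_le[OF graph] by (simp flip: of_nat_power)
  have "real max_rounds \<le> 2 * beta * ?n ^ 2"
    using two_le_beta \<open>real (card E) \<le> ?n ^ 2\<close> by (simp add: mult_mono)
  also have "\<dots> \<le> 2 * ?n * ?n ^ 2"
    using assms by (intro mult_right_mono) auto
  finally have "real (Suc max_rounds) \<le> 2 * ?n ^ 3 + 1"
    by (simp add: power2_eq_square power3_eq_cube)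
  also have "\<dots> \<le> ?n ^ 4"
  proof -
    have "1 \<le> ?n ^ 3" "4 * ?n ^ 3 \<le> ?n * ?n ^ 3"
      using assms two_le_beta by (auto intro: one_le_power mult_right_mono)
    then show ?thesis by (simp add: power_Suc[symmetric] del: power_Suc)
  qed
  finally show ?thesis .
qed

lemma prob_last_round_few_underfull:
  assumes "E \<noteq> {}" "100 * real (card E) * ln (real (card V)) \<le> real k * T"
    and "beta + 2 \<le> real (card V)"
  shows "1 - 1 / real (card V) \<le> measure sample_space
           {\<omega>. \<exists>r. is_last_round eps beta E pick k \<omega> r
              \<and> real (card (underfull_set eps beta E (H_at \<omega> ((r + 1) * k)))) < T}"
    (is "_ \<le> measure _ ?G")
proof -
  interpret prob_space sample_space
    by (rule prob_space.prob_space_stream_space[OF prob_space_measure_pmf])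
  let ?n = "real (card V)"
  let ?B = "\<Union>r \<le> max_rounds. missed_round k T r"
  have n: "4 \<le> ?n" using assms(3) two_le_beta by linarith
  have "0 < real (card E)" using assms(1) finite_edges by (simp add: card_gt_0_iff)
  have "exp (- (real k * T / real (card E))) \<le> exp (- (100 * ln ?n))"
    using assms(2) \<open>0 < real (card E)\<close> by (simp add: field_simps)
  also have "\<dots> = 1 / ?n ^ 100"
    using n powr_realpow[of ?n 100] by (simp add: exp_minus powr_def inverse_eq_divide)
  finally have missed: "measure sample_space (missed_round k T r) \<le> 1 / ?n ^ 100" for r
    using measure_missed_round[OF assms(1), of k T r] by linarith
  have "measure sample_space ?B \<le> (\<Sum>r \<le> max_rounds. measure sample_space (missed_round k T r))"
    by (intro finite_measure_subadditive_finite) (auto simp: sets_missed_round)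
  also have "\<dots> \<le> real (Suc max_rounds) / ?n ^ 100"
    using sum_mono[of "{..max_rounds}", OF missed] by simp
  also have "\<dots> \<le> ?n ^ 4 / ?n ^ 100"
    using max_rounds_le[OF assms(3)] by (intro divide_right_mono) auto
  also have "\<dots> \<le> 1 / ?n"
    using n by (simp add: field_simps power_increasing flip: power_Suc)
  finally have "measure sample_space ?B \<le> 1 / ?n" .
  moreover have "space sample_space - ?B \<subseteq> ?G"
    using last_round_few_underfull_unless_missed by blast
  then have "measure sample_space (space sample_space - ?B) \<le> measure sample_space ?G"
    by (intro finite_measure_mono sets_last_round_few_underfull)
  moreover have "measure sample_space (space sample_space - ?B) = 1 - measure sample_space ?B"
    by (intro prob_compl) (auto simp: sets_missed_round)
  ultimately show ?thesis by linarith
qed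

end

section \<open>Choice of the parameters\<close>

lemma samples_per_round_mult_ge:
  assumes "0 < mu_s * Delta_s powr gamma" "m \<le> m_s" "1 \<le> n"
  shows "100 * m * ln (real n)
           \<le> real (samples_per_round n mu_s m_s Delta_s gamma) * (mu_s * Delta_s powr gamma)"
proof -
  let ?T = "mu_s * Delta_s powr gamma"
  have "100 * m * ln (real n) \<le> 100 * m_s * ln (real n)"
    using assms(2,3) by (intro mult_right_mono) auto
  also have "\<dots> \<le> real (samples_per_round n mu_s m_s Delta_s gamma) * ?T"
    using real_nat_ceiling_ge[of "100 * m_s * ln (real n) / ?T"] assms(1)
    unfolding samples_per_round_def by (simp add: pos_divide_le_eq)
  finally show ?thesis .
qed

lemma K_div_eps_cube_bounds:
  fixes eps K :: real
  assumes "0 < eps" "eps \<le> 1/2" "1 \<le> K"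
  shows "2 \<le> K / eps ^ 3" "3 \<le> eps * (K / eps ^ 3)"
proof -
  have "eps ^ 3 \<le> (1/2) ^ 3" "eps ^ 2 \<le> (1/2) ^ 2"
    using assms by (intro power_mono; simp)+
  then have "8 * eps ^ 3 \<le> K" "4 * eps ^ 2 \<le> K"
    using assms(3) by (simp_all add: power_divide)
  moreover have "0 < eps ^ 2" "0 < eps ^ 3" using assms(1) by simp_all
  ultimately have "8 \<le> K / eps ^ 3" "4 \<le> K / eps ^ 2"
    by (simp_all add: le_divide_eq)
  moreover have "eps * (K / eps ^ 3) = K / eps ^ 2"
    using assms(1) by (simp add: power2_eq_square power3_eq_cube)
  ultimately show "2 \<le> K / eps ^ 3" "3 \<le> eps * (K / eps ^ 3)"
    by simp_all
qed

lemma last_round_few_underfull_whp: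
  fixes eps K :: real
  assumes "0 < eps" "eps \<le> 1/2" "1 \<le> K"
    and "simple_graph V E" "E \<noteq> {}" "nat \<lceil>K / eps ^ 3\<rceil> + 2 \<le> card V"
    and mu: "real (max_matching_size E) / (2 + eps) \<le> mu_s"
    and Delta: "2 * real (card E) / real (card V) \<le> Delta_s"
    and "real (card E) \<le> m_s"
    and "\<forall>H\<subseteq>E. (\<exists>f\<in>H. overfull (K / eps ^ 3) H f)
           \<longrightarrow> pick H \<in> H \<and> overfull (K / eps ^ 3) H (pick H)"
  shows "1 - 1 / real (card V) \<le> measure (stream_space (measure_pmf (pmf_of_set E)))
          {\<omega>. \<exists>r. is_last_round eps (K / eps ^ 3) E pick
                     (samples_per_round (card V) mu_s m_s Delta_s gamma) \<omega> r
                 \<and> real (card (underfull_set eps (K / eps ^ 3) E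
                        (H_after eps (K / eps ^ 3) E pick \<omega>
                           ((r + 1) * samples_per_round (card V) mu_s m_s Delta_s gamma))))
                   < mu_s * Delta_s powr gamma}"
proof -
  interpret edcs_sampling V E eps "K / eps ^ 3" pick
    using assms(4,10) K_div_eps_cube_bounds[OF assms(1-3)] by unfold_locales auto
  have n: "K / eps ^ 3 + 2 \<le> real (card V)"
    using assms(6) real_nat_ceiling_ge[of "K / eps ^ 3"] by linarith
  have "0 < real (card V)" using n K_div_eps_cube_bounds[OF assms(1-3)] by linarith
  moreover have "0 < real (card E)" using assms(5) finite_edges by (simp add: card_gt_0_iff)
  ultimately have "0 < 2 * real (card E) / real (card V)" by simp
  then have "0 < Delta_s" using Delta by linarith
  have "0 < real (max_matching_size E) / (2 + eps)"
    using max_matching_size_pos[OF finite_edges assms(5)] assms(1) by simp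
  with \<open>0 < Delta_s\<close> mu have "0 < mu_s * Delta_s powr gamma" by simp
  then have "100 * real (card E) * ln (real (card V))
      \<le> real (samples_per_round (card V) mu_s m_s Delta_s gamma) * (mu_s * Delta_s powr gamma)"
    using assms(9) \<open>0 < real (card V)\<close> by (intro samples_per_round_mult_ge) auto
  from prob_last_round_few_underfull[OF assms(5) this n] show ?thesis .
qed

theorem corollary3p3:
  fixes eps K :: real
  assumes "0 < eps" and "eps \<le> 1/2" and "1 \<le> K"
  shows "\<exists>c>0. \<exists>N::nat. \<forall>(V::'a set) (E::'a set set) (mu_s::real) (m_s::real) (Delta_s::real)
            (gamma::real) (pick::'a set set \<Rightarrow> 'a set).
    (simple_graph V E \<and> E \<noteq> {} \<and> N \<le> card V
     \<and> real (max_matching_size E) / (2 + eps) \<le> mu_s \<and> mu_s \<le> real (card V)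
     \<and> 2 * real (card E) / real (card V) \<le> Delta_s \<and> Delta_s \<le> real (card V)
     \<and> real (card E) \<le> m_s \<and> 0 < gamma \<and> gamma < 1
     \<and> (\<forall>H\<subseteq>E. (\<exists>f\<in>H. overfull (K / eps ^ 3) H f)
                  \<longrightarrow> pick H \<in> H \<and> overfull (K / eps ^ 3) H (pick H)))
    \<longrightarrow> measure (stream_space (measure_pmf (pmf_of_set E)))
          {\<omega>. \<exists>r. is_last_round eps (K / eps ^ 3) E pick
                     (samples_per_round (card V) mu_s m_s Delta_s gamma) \<omega> r
                 \<and> real (card (underfull_set eps (K / eps ^ 3) E
                        (H_after eps (K / eps ^ 3) E pick \<omega>
                           ((r + 1) * samples_per_round (card V) mu_s m_s Delta_s gamma))))
                   < mu_s * Delta_s powr gamma}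
        \<ge> 1 - 1 / real (card V) powr c"
  by (rule exI[of _ 1], intro conjI exI[of _ "nat \<lceil>K / eps ^ 3\<rceil> + 2"] allI impI)
     (simp_all only: zero_less_one powr_one[OF of_nat_0_le_iff],
      blast intro: last_round_few_underfull_whp[OF assms])

end
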